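(* Let $\mu$ be an atomic probability measure on $\mathbb{R}$ consisting of exactly $m$ distinct atoms and let $\nu$ be an atomic probability measure consisting of exactly $n$ distinct atoms. Then $\mu\rhd\nu$ is an atomic probability measure consisting of exactly $mn$ distinct atoms.
   Context: For a probability measure $\mu$ on $\mathbb{R}$, $G_\mu(z)=\int\frac{1}{z-x}d\mu(x)$ on $\mathbb{C}^+$ and $H_\mu=1/G_\mu$. The monotone convolution $\mu\rhd\nu$ is the unique probability measure with $H_{\mu\rhd\nu}=H_\mu\circ H_\nu$ on $\mathbb{C}^+$. An atomic probability measure with $m$ distinct atoms is of the form $\sum_{k=1}^m\lambda_k\delta_{a_k}$ with $\lambda_k>0$ and distinct $a_k$. *)

theory Defs
  imports "HOL-Probability.Probability"
begin

definition real_prob_measure :: "real measure \<Rightarrow> bool" where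
  "real_prob_measure \<mu> \<longleftrightarrow> prob_space \<mu> \<and> sets \<mu> = sets borel"

definition cauchy_G :: "real measure \<Rightarrow> complex \<Rightarrow> complex" where
  "cauchy_G \<mu> z = integral\<^sup>L \<mu> (\<lambda>x. 1 / (z - complex_of_real x))"

definition cauchy_H :: "real measure \<Rightarrow> complex \<Rightarrow> complex" where
  "cauchy_H \<mu> z = 1 / cauchy_G \<mu> z"

definition monotone_conv :: "real measure \<Rightarrow> real measure \<Rightarrow> real measure" where
  "monotone_conv \<mu> \<nu> = (THE \<rho>. real_prob_measure \<rho> \<and>
     (\<forall>z. Im z > 0 \<longrightarrow> cauchy_H \<rho> z = cauchy_H \<mu> (cauchy_H \<nu> z)))"

definition atomic_prob :: "real measure \<Rightarrow> nat \<Rightarrow> bool" where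
  "atomic_prob \<mu> m \<longleftrightarrow> real_prob_measure \<mu> \<and>
     (\<exists>a w. inj_on a {..<m} \<and> (\<forall>k<m. w k > (0::real)) \<and>
        (\<forall>A\<in>sets borel. emeasure \<mu> A = (\<Sum>k<m. ennreal (w k) * indicator A (a k))))"

end

theory Submission
  imports Defs "HOL-Computational_Algebra.Polynomial"
begin

text \<open>Write \<open>\<nu> = (\<Sum>s\<in>S. p s \<cdot> \<delta> s)\<close> with \<open>card S = n\<close>. Then \<open>G\<^sub>\<nu> = R / Q\<close> with
  \<open>Q x = (\<Prod>t\<in>S. x - t)\<close> and \<open>degree R = n - 1\<close>, so for real \<open>a\<close> we get
  \<open>1 / (H\<^sub>\<nu> - a) = R / P\<^sub>a\<close> where \<open>P\<^sub>a = Q - a R\<close> is monic of degree \<open>n\<close>. By the intermediate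
  value theorem \<open>P\<^sub>a\<close> has a root between any two consecutive atoms of \<open>\<nu>\<close> and, if \<open>a \<noteq> 0\<close>, one
  more outside their convex hull; so it has \<open>n\<close> simple real roots. Partial fractions then write
  \<open>1 / (H\<^sub>\<nu> - a)\<close> as \<open>\<Sum>b. w\<^sub>a b / (z - b)\<close> over these roots, where \<open>\<Sum>b. w\<^sub>a b = 1\<close> by comparing
  leading coefficients and \<open>w\<^sub>a b > 0\<close> because the function maps the upper half-plane to the lower
  one. The root sets of \<open>P\<^sub>a\<close> and \<open>P\<^sub>a\<^sub>'\<close> are disjoint for \<open>a \<noteq> a'\<close>, as \<open>P\<^sub>a - P\<^sub>a\<^sub>' = (a' - a) R\<close>
  and \<open>Q\<close>, \<open>R\<close> have no common root. Hence \<open>G\<^sub>\<mu> (H\<^sub>\<nu> z) = (\<Sum>a. \<lambda>\<^sub>a / (H\<^sub>\<nu> z - a))\<close> is the Cauchy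
  transform of an atomic measure with \<open>m n\<close> atoms, and this measure is \<open>\<mu> \<rhd> \<nu>\<close> because Stieltjes
  inversion recovers the mass of each point from the Cauchy transform.\<close>

definition finite_atomic :: "real measure \<Rightarrow> real set \<Rightarrow> (real \<Rightarrow> real) \<Rightarrow> bool" where
  "finite_atomic M F q \<longleftrightarrow> real_prob_measure M \<and> finite F \<and> (\<forall>s\<in>F. q s > 0) \<and>
     (\<forall>A\<in>sets borel. emeasure M A = (\<Sum>s\<in>F. ennreal (q s) * indicator A s))"

lemma atomic_prob_iff_finite_atomic: "atomic_prob M m \<longleftrightarrow> (\<exists>F q. finite_atomic M F q \<and> card F = m)"
proof
  assume "atomic_prob M m"
  then obtain a w where M: "real_prob_measure M" and inj: "inj_on a {..<m}"
    and w: "\<forall>k<m. w k > (0::real)"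
    and e: "\<forall>A\<in>sets borel. emeasure M A = (\<Sum>k<m. ennreal (w k) * indicator A (a k))"
    unfolding atomic_prob_def by blast
  define q where "q = w \<circ> the_inv_into {..<m} a"
  have "finite_atomic M (a ` {..<m}) q"
    unfolding finite_atomic_def
  proof (intro conjI ballI)
    show "q s > 0" if "s \<in> a ` {..<m}" for s
      using that w inj by (auto simp: q_def the_inv_into_f_f)
    fix A :: "real set" assume "A \<in> sets borel"
    have "(\<Sum>s\<in>a ` {..<m}. ennreal (q s) * indicator A s) = (\<Sum>k<m. ennreal (q (a k)) * indicator A (a k))"
      by (rule sum.reindex[OF inj, unfolded comp_def])
    also have "\<dots> = (\<Sum>k<m. ennreal (w k) * indicator A (a k))"
      by (rule sum.cong) (auto simp: q_def the_inv_into_f_f[OF inj])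
    finally show "emeasure M A = (\<Sum>s\<in>a ` {..<m}. ennreal (q s) * indicator A s)"
      using e \<open>A \<in> sets borel\<close> by simp
  qed (use M in auto)
  moreover have "card (a ` {..<m}) = m" using card_image[OF inj] by simp
  ultimately show "\<exists>F q. finite_atomic M F q \<and> card F = m" by blast
next
  assume "\<exists>F q. finite_atomic M F q \<and> card F = m"
  then obtain F q where r: "finite_atomic M F q" and c: "card F = m" by blast
  then obtain h where h: "bij_betw h {..<m} F"
    using ex_bij_betw_nat_finite[of F] by (auto simp: finite_atomic_def lessThan_atLeast0)
  have inj: "inj_on h {..<m}" and im: "h ` {..<m} = F" using h by (auto simp: bij_betw_def)
  have "emeasure M A = (\<Sum>k<m. ennreal (q (h k)) * indicator A (h k))" if "A \<in> sets borel" for A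
    using r that sum.reindex[OF inj, of "\<lambda>s. ennreal (q s) * indicator A s"]
    by (simp add: im finite_atomic_def)
  moreover have "\<forall>k<m. 0 < q (h k)" using r im by (auto simp: finite_atomic_def)
  ultimately show "atomic_prob M m"
    using r inj unfolding atomic_prob_def finite_atomic_def
    by (intro conjI exI[of _ h] exI[of _ "\<lambda>k. q (h k)"]) auto
qed

lemma space_real_prob_measure: "real_prob_measure M \<Longrightarrow> space M = UNIV"
  unfolding real_prob_measure_def using sets_eq_imp_space_eq by fastforce

lemma finite_atomic_sum_weights:
  assumes "finite_atomic M F q" shows "sum q F = 1"
proof -
  have rp: "real_prob_measure M" and pos: "\<forall>s\<in>F. q s > 0"
    and e: "\<forall>A\<in>sets borel. emeasure M A = (\<Sum>s\<in>F. ennreal (q s) * indicator A s)"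
    using assms by (auto simp: finite_atomic_def)
  interpret prob_space M using rp by (simp add: real_prob_measure_def)
  have "emeasure M UNIV = 1" using emeasure_space_1 space_real_prob_measure[OF rp] by simp
  then have "ennreal (sum q F) = 1" using e pos by (subst sum_ennreal[symmetric]) auto
  then show ?thesis using pos by (simp add: ennreal_eq_1 sum_nonneg less_imp_le)
qed

definition atomic_pmf :: "real set \<Rightarrow> (real \<Rightarrow> real) \<Rightarrow> real pmf" where
  "atomic_pmf F q = embed_pmf (\<lambda>x. if x \<in> F then q x else 0)"

definition atomic_measure :: "real set \<Rightarrow> (real \<Rightarrow> real) \<Rightarrow> real measure" where
  "atomic_measure F q = distr (measure_pmf (atomic_pmf F q)) borel id"

lemma
  assumes "finite F" and "\<forall>s\<in>F. q s > 0" and "sum q F = 1"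
  shows pmf_atomic_pmf: "pmf (atomic_pmf F q) x = (if x \<in> F then q x else 0)"
    and set_pmf_atomic_pmf: "set_pmf (atomic_pmf F q) = F"
proof -
  define g where "g = (\<lambda>x. if x \<in> F then q x else 0)"
  have nn: "\<And>x. 0 \<le> g x" using assms by (auto simp: g_def less_imp_le)
  have "(\<integral>\<^sup>+x. ennreal (g x) \<partial>count_space UNIV) = 1"
    using assms by (subst nn_integral_count_space'[of F]) (auto simp: g_def sum_ennreal less_imp_le)
  with nn have "pmf (embed_pmf g) x = g x" and "set_pmf (embed_pmf g) = {x. g x \<noteq> 0}"
    by (rule pmf_embed_pmf, rule set_embed_pmf)
  then show "pmf (atomic_pmf F q) x = (if x \<in> F then q x else 0)"
    and "set_pmf (atomic_pmf F q) = F"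
    using assms by (auto simp: atomic_pmf_def g_def)
qed

lemma finite_atomic_atomic_measure:
  assumes fin: "finite F" and pos: "\<forall>s\<in>F. q s > 0" and "sum q F = 1"
  shows "finite_atomic (atomic_measure F q) F q"
proof -
  define P where "P = atomic_pmf F q"
  have eq: "atomic_measure F q = distr (measure_pmf P) borel id"
    by (simp add: atomic_measure_def P_def)
  have setP: "set_pmf P = F" and pmfP: "\<And>x. x \<in> F \<Longrightarrow> pmf P x = q x"
    using assms by (simp_all add: P_def set_pmf_atomic_pmf pmf_atomic_pmf)
  have "emeasure (atomic_measure F q) A = (\<Sum>s\<in>F. ennreal (q s) * indicator A s)"
    if A: "A \<in> sets borel" for A
  proof -
    have "emeasure (atomic_measure F q) A = emeasure (measure_pmf P) (A \<inter> F)"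
      using A emeasure_Int_set_pmf[of P A] by (simp add: eq emeasure_distr setP)
    also have "\<dots> = (\<Sum>s\<in>A \<inter> F. ennreal (pmf P s))"
      using fin by (simp add: emeasure_measure_pmf_finite)
    also have "\<dots> = (\<Sum>s\<in>F. ennreal (q s) * indicator A s)"
      using fin by (auto simp: pmfP indicator_def intro!: sum.mono_neutral_cong_left)
    finally show ?thesis .
  qed
  moreover have "real_prob_measure (atomic_measure F q)"
    unfolding real_prob_measure_def eq
    by (auto intro!: prob_space.prob_space_distr prob_space_measure_pmf)
  ultimately show ?thesis using fin pos by (simp add: finite_atomic_def)
qed

lemma integral_atomic_measure:
  fixes f :: "real \<Rightarrow> complex"
  assumes "finite F" and "\<forall>s\<in>F. q s > 0" and "sum q F = 1" and f: "f \<in> borel_measurable borel"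
  shows "integral\<^sup>L (atomic_measure F q) f = (\<Sum>s\<in>F. of_real (q s) * f s)"
proof -
  define P where "P = atomic_pmf F q"
  have eq: "atomic_measure F q = distr (measure_pmf P) borel id"
    by (simp add: atomic_measure_def P_def)
  have setP: "set_pmf P = F" and pmfP: "\<And>x. x \<in> F \<Longrightarrow> pmf P x = q x"
    using assms by (simp_all add: P_def set_pmf_atomic_pmf pmf_atomic_pmf)
  have "integral\<^sup>L (atomic_measure F q) f = integral\<^sup>L (measure_pmf P) f"
    unfolding eq by (subst integral_distr) (use f in auto)
  also have "\<dots> = (\<Sum>s\<in>F. pmf P s *\<^sub>R f s)"
    by (rule integral_measure_pmf[OF assms(1)]) (use setP in auto)
  finally show ?thesis by (simp add: pmfP scaleR_conv_of_real)
qed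

lemma finite_atomic_eq_atomic_measure:
  assumes r: "finite_atomic M F q" shows "M = atomic_measure F q"
proof -
  have r': "finite_atomic (atomic_measure F q) F q"
    using r finite_atomic_sum_weights[OF r]
    by (intro finite_atomic_atomic_measure) (auto simp: finite_atomic_def)
  show ?thesis
  proof (rule measure_eqI)
    show "sets M = sets (atomic_measure F q)"
      using r r' by (simp add: finite_atomic_def real_prob_measure_def)
    fix A assume "A \<in> sets M"
    then have "A \<in> sets borel" using r by (simp add: finite_atomic_def real_prob_measure_def)
    then show "emeasure M A = emeasure (atomic_measure F q) A"
      using r r' by (simp add: finite_atomic_def)
  qed
qed

lemma integral_finite_atomic:
  fixes f :: "real \<Rightarrow> complex"
  assumes r: "finite_atomic M F q" and f: "f \<in> borel_measurable borel"
  shows "integral\<^sup>L M f = (\<Sum>s\<in>F. of_real (q s) * f s)"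
proof -
  have "finite F" and "\<forall>s\<in>F. q s > 0" using r by (auto simp: finite_atomic_def)
  then show ?thesis
    using integral_atomic_measure[OF _ _ finite_atomic_sum_weights[OF r] f]
      finite_atomic_eq_atomic_measure[OF r] by simp
qed

lemma cauchy_G_finite_atomic:
  "finite_atomic M F q \<Longrightarrow> cauchy_G M z = (\<Sum>s\<in>F. of_real (q s) / (z - of_real s))"
  unfolding cauchy_G_def by (subst integral_finite_atomic) auto

lemma Im_of_real_div: "Im (of_real c / w) = c * Im (1 / w)"
  by (simp add: Im_divide)

lemma Im_Cauchy_kernel:
  "y * Im (1 / (complex_of_real x + \<i> * of_real y - of_real t)) = - (y\<^sup>2 / ((x - t)\<^sup>2 + y\<^sup>2))"
  by (simp add: Im_divide power2_eq_square)

lemma tendsto_Poisson_kernel: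
  "(\<lambda>n. (1 / real (Suc n))\<^sup>2 / ((x - t)\<^sup>2 + (1 / real (Suc n))\<^sup>2)) \<longlonglongrightarrow> indicator {x} t"
proof (cases "t = x")
  case True
  then show ?thesis by (simp add: indicator_def)
next
  case False
  have "(\<lambda>n. 1 / real (Suc n)) \<longlonglongrightarrow> 0"
    using LIMSEQ_Suc[OF lim_const_over_n[of 1]] by simp
  moreover have "(x - t)\<^sup>2 > 0" using False by simp
  ultimately have "(\<lambda>n. (1 / real (Suc n))\<^sup>2 / ((x - t)\<^sup>2 + (1 / real (Suc n))\<^sup>2))
      \<longlonglongrightarrow> 0\<^sup>2 / ((x - t)\<^sup>2 + 0\<^sup>2)"
    by (intro tendsto_intros) auto
  then show ?thesis using False by simp
qed

lemma integrable_Cauchy_kernel: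
  assumes "real_prob_measure M" and z: "Im z > 0"
  shows "integrable M (\<lambda>t. 1 / (z - complex_of_real t))"
proof -
  interpret prob_space M using assms by (simp add: real_prob_measure_def)
  show ?thesis
  proof (rule integrable_const_bound[where B="1 / Im z"])
    have "Im z \<le> norm (z - complex_of_real t)" for t
      using abs_Im_le_cmod[of "z - complex_of_real t"] by simp
    then show "AE t in M. norm (1 / (z - complex_of_real t)) \<le> 1 / Im z"
      using z by (intro AE_I2) (simp add: norm_divide frac_le)
    have "sets M = sets borel" using assms by (simp add: real_prob_measure_def)
    then show "(\<lambda>t. 1 / (z - complex_of_real t)) \<in> borel_measurable M"
      by (subst measurable_cong_sets[OF _ refl]) measurable
  qed
qed

lemma tendsto_Im_cauchy_G_atom:
  assumes rp: "real_prob_measure M"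
  shows "(\<lambda>n. - (1 / real (Suc n)) * Im (cauchy_G M (of_real x + \<i> * of_real (1 / real (Suc n)))))
           \<longlonglongrightarrow> measure M {x}"
proof -
  interpret prob_space M using rp by (simp add: real_prob_measure_def)
  have sets: "sets M = sets borel" using rp by (simp add: real_prob_measure_def)
  define y where "y n = 1 / real (Suc n)" for n
  define k where "k n t = (y n)\<^sup>2 / ((x - t)\<^sup>2 + (y n)\<^sup>2)" for n t
  have "- y n * Im (cauchy_G M (of_real x + \<i> * of_real (y n))) = integral\<^sup>L M (k n)" for n
  proof -
    let ?z = "complex_of_real x + \<i> * of_real (y n)"
    have "- y n * Im (cauchy_G M ?z) = - y n * integral\<^sup>L M (\<lambda>t. Im (1 / (?z - of_real t)))"
      unfolding cauchy_G_def
      by (subst integral_Im) (auto intro: integrable_Cauchy_kernel[OF rp] simp: y_def)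
    also have "\<dots> = integral\<^sup>L M (\<lambda>t. - (y n * Im (1 / (?z - of_real t))))"
      by simp
    also have "\<dots> = integral\<^sup>L M (k n)"
      unfolding Im_Cauchy_kernel k_def by simp
    finally show ?thesis .
  qed
  moreover have "(\<lambda>n. integral\<^sup>L M (k n)) \<longlonglongrightarrow> integral\<^sup>L M (indicator {x} :: real \<Rightarrow> real)"
  proof (rule integral_dominated_convergence[where w="\<lambda>_. 1"])
    show "indicator {x} \<in> borel_measurable M" "k n \<in> borel_measurable M" for n
      unfolding measurable_cong_sets[OF sets refl] k_def by measurable
    show "AE t in M. (\<lambda>n. k n t) \<longlonglongrightarrow> indicator {x} t"
      using tendsto_Poisson_kernel by (simp add: k_def y_def)
    show "AE t in M. norm (k n t) \<le> 1" for n
      by (intro AE_I2) (simp add: k_def y_def divide_le_eq_1_pos add_nonneg_pos)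
  qed simp
  ultimately show ?thesis
    using space_real_prob_measure[OF rp] by (simp add: y_def)
qed

lemma tendsto_Im_partial_fractions:
  fixes d :: "real \<Rightarrow> real"
  assumes "finite B"
  shows "(\<lambda>n. - (1 / real (Suc n)) * Im (\<Sum>b\<in>B. of_real (d b) /
            (of_real x + \<i> * of_real (1 / real (Suc n)) - of_real b)))
         \<longlonglongrightarrow> (if x \<in> B then d x else 0)"
proof -
  have sum_eq: "- y * Im (\<Sum>b\<in>B. of_real (d b) / (of_real x + \<i> * of_real y - of_real b))
      = (\<Sum>b\<in>B. d b * (y\<^sup>2 / ((x - b)\<^sup>2 + y\<^sup>2)))" for y
  proof -
    have "- y * Im (of_real (d b) / (of_real x + \<i> * of_real y - of_real b))
        = d b * - (y * Im (1 / (of_real x + \<i> * of_real y - of_real b)))" for b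
      by (simp add: Im_of_real_div)
    then show ?thesis
      unfolding Im_Cauchy_kernel minus_minus by (simp add: Im_sum sum_distrib_left sum_negf[symmetric])
  qed
  have delta: "(\<Sum>b\<in>B. d b * indicator {x} b) = (if x \<in> B then d x else 0)"
    using assms by (simp add: indicator_def if_distrib sum.delta cong: if_cong)
  show ?thesis
    unfolding sum_eq delta[symmetric] by (intro tendsto_sum tendsto_mult_left tendsto_Poisson_kernel)
qed

lemma measure_singleton_finite_atomic:
  assumes "finite_atomic M F q"
  shows "measure M {x} = (if x \<in> F then q x else 0)"
proof -
  have e: "emeasure M {x} = (\<Sum>s\<in>F. ennreal (q s) * indicator {x} s)"
    and fin: "finite F" and pos: "\<forall>s\<in>F. q s > 0"
    using assms by (auto simp: finite_atomic_def)
  have "(\<Sum>s\<in>F. ennreal (q s) * indicator {x} s) = (\<Sum>s\<in>F. if s = x then ennreal (q x) else 0)"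
    by (rule sum.cong) (auto simp: indicator_def)
  then have "emeasure M {x} = (if x \<in> F then ennreal (q x) else 0)"
    using e fin by (simp add: sum.delta')
  then show ?thesis using pos by (auto simp: measure_def less_imp_le)
qed

lemma finite_atomic_if_measure_singleton:
  assumes rp: "real_prob_measure M" and fin: "finite F" and pos: "\<forall>s\<in>F. q s > 0"
    and sum1: "sum q F = 1" and singleton: "\<And>x. measure M {x} = (if x \<in> F then q x else 0)"
  shows "finite_atomic M F q"
proof -
  interpret prob_space M using rp by (simp add: real_prob_measure_def)
  have sets: "sets M = sets borel" using rp by (simp add: real_prob_measure_def)
  have eM: "emeasure M {x} = ennreal (q x)" if "x \<in> F" for x
    using singleton[of x] emeasure_eq_measure[of "{x}"] that by simp
  have Fb: "F \<in> sets M" using fin sets by (simp add: finite_imp_closed)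
  have "emeasure M F = (\<Sum>s\<in>F. ennreal (q s))"
    using emeasure_eq_sum_singleton[OF fin] sets eM by simp
  also have "\<dots> = 1" using pos sum1 by (subst sum_ennreal) (auto simp: less_imp_le)
  finally have null: "emeasure M (space M - F) = 0"
    using emeasure_compl[OF Fb] emeasure_space_1 by simp
  have "emeasure M A = (\<Sum>s\<in>F. ennreal (q s) * indicator A s)" if A: "A \<in> sets borel" for A
  proof -
    have AF: "A \<inter> F \<in> sets M" "A - F \<in> sets M" using A Fb sets by auto
    have "emeasure M (A - F) \<le> emeasure M (space M - F)"
      using sets.compl_sets[OF Fb] space_real_prob_measure[OF rp] by (intro emeasure_mono) auto
    then have "emeasure M (A - F) = 0" using null by simp
    then have "emeasure M A = emeasure M (A \<inter> F)"
      using plus_emeasure[OF AF] by (simp add: Int_Diff_Un Int_Diff_disjoint)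
    also have "\<dots> = (\<Sum>s\<in>A \<inter> F. ennreal (q s))"
      using fin sets eM by (subst emeasure_eq_sum_singleton) auto
    also have "\<dots> = (\<Sum>s\<in>F. ennreal (q s) * indicator A s)"
      using fin by (auto simp: indicator_def intro!: sum.mono_neutral_cong_left)
    finally show ?thesis .
  qed
  then show ?thesis using rp fin pos by (simp add: finite_atomic_def)
qed

lemma measure_singleton_eq_if_cauchy_G_eq:
  assumes "real_prob_measure M" "real_prob_measure N"
    and "\<forall>z. Im z > 0 \<longrightarrow> cauchy_G M z = cauchy_G N z"
  shows "measure M {x} = measure N {x}"
proof (rule LIMSEQ_unique)
  show "(\<lambda>n. - (1 / real (Suc n)) * Im (cauchy_G M (of_real x + \<i> * of_real (1 / real (Suc n)))))
      \<longlonglongrightarrow> measure N {x}"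
    using tendsto_Im_cauchy_G_atom[OF assms(2), of x] assms(3) by simp
qed (rule tendsto_Im_cauchy_G_atom[OF assms(1)])

lemma eq_finite_atomic_if_cauchy_G_eq:
  assumes M: "real_prob_measure M" and N: "finite_atomic N F q"
    and G: "\<forall>z. Im z > 0 \<longrightarrow> cauchy_G M z = cauchy_G N z"
  shows "M = N"
proof -
  have "real_prob_measure N" and "finite F" and "\<forall>s\<in>F. q s > 0"
    using N by (auto simp: finite_atomic_def)
  then have "finite_atomic M F q"
    using measure_singleton_eq_if_cauchy_G_eq[OF M _ G] measure_singleton_finite_atomic[OF N]
      finite_atomic_sum_weights[OF N]
    by (intro finite_atomic_if_measure_singleton[OF M]) auto
  from finite_atomic_eq_atomic_measure[OF this] finite_atomic_eq_atomic_measure[OF N]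
  show ?thesis by simp
qed

lemma monotone_conv_eqI:
  assumes \<rho>: "finite_atomic \<rho> F q"
    and H: "\<And>z. Im z > 0 \<Longrightarrow> cauchy_H \<rho> z = cauchy_H \<mu> (cauchy_H \<nu> z)"
  shows "monotone_conv \<mu> \<nu> = \<rho>"
  unfolding monotone_conv_def
proof (rule the_equality)
  show "real_prob_measure \<rho> \<and> (\<forall>z. Im z > 0 \<longrightarrow> cauchy_H \<rho> z = cauchy_H \<mu> (cauchy_H \<nu> z))"
    using \<rho> H by (simp add: finite_atomic_def)
  fix \<rho>' assume \<rho>': "real_prob_measure \<rho>' \<and> (\<forall>z. Im z > 0 \<longrightarrow> cauchy_H \<rho>' z = cauchy_H \<mu> (cauchy_H \<nu> z))"
  have "cauchy_G \<rho>' z = cauchy_G \<rho> z" if "Im z > 0" for z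
  proof -
    have "cauchy_H \<rho>' z = cauchy_H \<rho> z" using \<rho>' H[OF that] that by simp
    then show ?thesis by (simp add: cauchy_H_def)
  qed
  then show "\<rho>' = \<rho>"
    using \<rho>' eq_finite_atomic_if_cauchy_G_eq[OF _ \<rho>] by blast
qed

definition root_factor :: "real \<Rightarrow> complex poly" where
  "root_factor t = [:- complex_of_real t, 1:]"

lemma poly_root_factor [simp]: "poly (root_factor t) z = z - complex_of_real t"
  by (simp add: root_factor_def)

lemma root_factor_nonzero [simp]: "root_factor t \<noteq> 0"
  by (simp add: root_factor_def)

lemma
  assumes "finite T"
  shows degree_prod_root_factor: "degree (\<Prod>t\<in>T. root_factor t) = card T"
    and coeff_prod_root_factor: "coeff (\<Prod>t\<in>T. root_factor t) (card T) = 1"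
proof -
  show deg: "degree (\<Prod>t\<in>T. root_factor t) = card T"
    by (subst degree_prod_eq_sum_degree) (auto simp: root_factor_def)
  have "lead_coeff (\<Prod>t\<in>T. root_factor t) = 1"
    by (simp add: lead_coeff_prod root_factor_def)
  then show "coeff (\<Prod>t\<in>T. root_factor t) (card T) = 1" by (simp add: deg)
qed

lemma poly_eqI_on_finite_set:
  fixes p q :: "complex poly"
  assumes B: "finite B" "card B = n" and deg: "degree p \<le> n" "degree q \<le> n"
    and coeff: "coeff p n = coeff q n" and eq: "\<forall>x\<in>B. poly p x = poly q x"
  shows "p = q"
proof (rule ccontr)
  define D where "D = p - q"
  assume "p \<noteq> q"
  then have D: "D \<noteq> 0" by (simp add: D_def)
  have "degree D \<le> n" using deg unfolding D_def by (rule degree_diff_le)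
  moreover have "coeff D (degree D) \<noteq> 0" using D by simp
  moreover have "coeff D n = 0" using coeff by (simp add: D_def)
  ultimately have "degree D < n" by (metis le_neq_implies_less)
  moreover have "card B \<le> card {x. poly D x = 0}"
    using eq by (intro card_mono poly_roots_finite[OF D]) (auto simp: D_def)
  ultimately show False using card_poly_roots_bound[OF D] B by linarith
qed

lemma IVT_sign_change:
  fixes f :: "real \<Rightarrow> real"
  assumes "continuous_on {l..u} f" and "l < u" and sign: "f l * f u < 0"
  shows "\<exists>x. l < x \<and> x < u \<and> f x = 0"
proof -
  have "\<exists>x. l \<le> x \<and> x \<le> u \<and> f x = 0"
  proof (cases "f l < 0")
    case True
    then show ?thesis using IVT'[of f l 0 u] sign assms by (auto simp: mult_less_0_iff)
  next
    case False
    then show ?thesis using IVT2'[of f u 0 l] sign assms by (auto simp: mult_less_0_iff)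
  qed
  moreover have "f l \<noteq> 0" "f u \<noteq> 0" using sign by auto
  ultimately show ?thesis by (metis order_le_less)
qed

lemma Im_one_div: "Im (1 / w) = - Im w / ((Re w)\<^sup>2 + (Im w)\<^sup>2)"
  by (simp add: Im_divide power2_eq_square)

lemma Im_one_div_neg: "Im w > 0 \<Longrightarrow> Im (1 / w) < 0"
  unfolding Im_one_div by (intro divide_neg_pos) (auto simp: add_nonneg_pos)

lemma Im_one_div_pos: "Im w < 0 \<Longrightarrow> Im (1 / w) > 0"
  unfolding Im_one_div by (intro divide_pos_pos) (auto simp: add_nonneg_pos)

locale finite_distribution =
  fixes S :: "real set" and p :: "real \<Rightarrow> real"
  assumes finite_S: "finite S" and S_nonempty: "S \<noteq> {}"
    and p_pos: "\<forall>s\<in>S. p s > 0" and sum_p: "sum p S = 1"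
begin

text \<open>\<open>Q\<close>, \<open>R\<close> and \<open>P a\<close> appear twice: as real functions for the intermediate value theorem,
  and as complex polynomials (suffix \<open>_poly\<close>) for counting and interpolating roots.\<close>

definition G :: "complex \<Rightarrow> complex" where
  "G z = (\<Sum>s\<in>S. complex_of_real (p s) / (z - complex_of_real s))"

definition G_real :: "real \<Rightarrow> real" where
  "G_real x = (\<Sum>s\<in>S. p s / (x - s))"

definition Q :: "real \<Rightarrow> real" where
  "Q x = (\<Prod>t\<in>S. x - t)"

definition R :: "real \<Rightarrow> real" where
  "R x = (\<Sum>s\<in>S. p s * (\<Prod>t\<in>S-{s}. x - t))"

definition P :: "real \<Rightarrow> real \<Rightarrow> real" where
  "P a x = Q x - a * R x"

definition Q_poly :: "complex poly" where
  "Q_poly = (\<Prod>t\<in>S. root_factor t)"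

definition R_poly :: "complex poly" where
  "R_poly = (\<Sum>s\<in>S. smult (complex_of_real (p s)) (\<Prod>t\<in>S-{s}. root_factor t))"

definition P_poly :: "real \<Rightarrow> complex poly" where
  "P_poly a = Q_poly - smult (complex_of_real a) R_poly"

lemma poly_Q_poly: "poly Q_poly z = (\<Prod>t\<in>S. z - complex_of_real t)"
  by (simp add: Q_poly_def poly_prod)

lemma poly_R_poly: "poly R_poly z = (\<Sum>s\<in>S. of_real (p s) * (\<Prod>t\<in>S-{s}. z - complex_of_real t))"
  by (simp add: R_poly_def poly_sum poly_prod)

lemma poly_R_poly_of_real: "poly R_poly (complex_of_real x) = complex_of_real (R x)"
  by (simp add: poly_R_poly R_def)

lemma poly_P_poly_of_real: "poly (P_poly a) (complex_of_real x) = complex_of_real (P a x)"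
  by (simp add: P_poly_def P_def poly_Q_poly poly_R_poly Q_def R_def)

lemma card_S_pos: "card S > 0"
  using finite_S S_nonempty by (simp add: card_gt_0_iff)

lemma degree_Q_poly: "degree Q_poly = card S" and coeff_Q_poly: "coeff Q_poly (card S) = 1"
  using degree_prod_root_factor[OF finite_S] coeff_prod_root_factor[OF finite_S]
  by (simp_all add: Q_poly_def)

lemma degree_R_poly: "degree R_poly \<le> card S - 1"
  unfolding R_poly_def
proof (intro degree_sum_le finite_S)
  fix s assume "s \<in> S"
  then show "degree (smult (complex_of_real (p s)) (\<Prod>t\<in>S-{s}. root_factor t)) \<le> card S - 1"
    using degree_prod_root_factor[of "S - {s}"] finite_S
    by (simp add: order_trans[OF degree_smult_le])
qed

lemma coeff_R_poly: "coeff R_poly (card S - 1) = 1"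
proof -
  have "coeff (\<Prod>t\<in>S-{s}. root_factor t) (card S - 1) = 1" if "s \<in> S" for s
    using coeff_prod_root_factor[of "S - {s}"] finite_S that by simp
  then have "coeff R_poly (card S - 1) = (\<Sum>s\<in>S. complex_of_real (p s))"
    by (simp add: R_poly_def coeff_sum)
  also have "\<dots> = 1" using sum_p by (simp flip: of_real_sum)
  finally show ?thesis .
qed

lemma degree_P_poly: "degree (P_poly a) \<le> card S"
  unfolding P_poly_def using degree_Q_poly degree_R_poly
  by (intro degree_diff_le) (auto intro: order_trans[OF degree_smult_le])

lemma coeff_P_poly: "coeff (P_poly a) (card S) = 1"
proof -
  have "coeff R_poly (card S) = 0"
    using degree_R_poly card_S_pos by (intro coeff_eq_0) simp
  then show ?thesis by (simp add: P_poly_def coeff_Q_poly)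
qed

lemma P_atom: "s \<in> S \<Longrightarrow> P a s = - a * p s * (\<Prod>t\<in>S-{s}. s - t)"
proof -
  assume s: "s \<in> S"
  have "Q s = 0" unfolding Q_def using s finite_S by (auto intro: prod_zero)
  moreover have "(\<Sum>s'\<in>S-{s}. p s' * (\<Prod>t\<in>S-{s'}. s - t)) = 0"
    using s finite_S by (intro sum.neutral) (auto intro: prod_zero)
  then have "R s = p s * (\<Prod>t\<in>S-{s}. s - t)"
    unfolding R_def using s finite_S by (simp add: sum.remove)
  ultimately show ?thesis by (simp add: P_def)
qed

lemma P_eq_Q_mult: "x \<notin> S \<Longrightarrow> P a x = Q x * (1 - a * G_real x)"
proof -
  assume x: "x \<notin> S"
  have "Q x * (p s / (x - s)) = p s * (\<Prod>t\<in>S-{s}. x - t)" if s: "s \<in> S" for s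
  proof -
    have "Q x = (x - s) * (\<Prod>t\<in>S-{s}. x - t)" unfolding Q_def using s finite_S by (simp add: prod.remove)
    moreover have "x - s \<noteq> 0" using x s by auto
    ultimately show ?thesis by simp
  qed
  then have "R x = Q x * G_real x" unfolding R_def G_real_def by (simp add: sum_distrib_left)
  then show ?thesis by (simp add: P_def algebra_simps)
qed

lemma continuous_on_P: "continuous_on A (P a)"
  unfolding P_def Q_def R_def by (intro continuous_intros)

lemma R_nonzero_at_root: assumes "P a b = 0" shows "R b \<noteq> 0"
proof
  assume R: "R b = 0"
  then have "Q b = 0" using assms by (simp add: P_def)
  then have b: "b \<in> S" unfolding Q_def using finite_S by auto
  have "P 1 b = 0" using R \<open>Q b = 0\<close> by (simp add: P_def)
  moreover have "(\<Prod>t\<in>S-{b}. b - t) \<noteq> 0" using finite_S by auto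
  ultimately show False using P_atom[OF b, of 1] p_pos b by auto
qed

definition P_roots :: "real \<Rightarrow> real set" where
  "P_roots a = {x. P a x = 0}"

lemma P_roots_disjoint: "a \<noteq> a' \<Longrightarrow> P_roots a \<inter> P_roots a' = {}"
  using R_nonzero_at_root by (force simp: P_roots_def P_def algebra_simps)

lemma P_poly_nonzero: "P_poly a \<noteq> 0"
  by (metis coeff_P_poly coeff_0 zero_neq_one)

lemma
  shows finite_P_roots: "finite (P_roots a)"
    and card_P_roots_le: "card (P_roots a) \<le> card S"
proof -
  have sub: "complex_of_real ` P_roots a \<subseteq> {z. poly (P_poly a) z = 0}"
    by (auto simp: P_roots_def poly_P_poly_of_real)
  have fin: "finite {z. poly (P_poly a) z = 0}" by (rule poly_roots_finite[OF P_poly_nonzero])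
  have inj: "inj_on complex_of_real (P_roots a)" by (simp add: inj_on_def)
  show "finite (P_roots a)"
    using finite_subset[OF sub fin] finite_image_iff[OF inj] by simp
  have "card (P_roots a) = card (complex_of_real ` P_roots a)" by (simp add: card_image[OF inj])
  also have "\<dots> \<le> card {z. poly (P_poly a) z = 0}" by (rule card_mono[OF fin sub])
  also have "\<dots> \<le> card S"
    using card_poly_roots_bound[OF P_poly_nonzero] degree_P_poly by (rule order_trans)
  finally show "card (P_roots a) \<le> card S" .
qed

definition next_atom :: "real \<Rightarrow> real" where
  "next_atom s = Min {t\<in>S. s < t}"

lemma next_atom:
  assumes "s < Max S"
  shows "next_atom s \<in> S" "s < next_atom s" "\<forall>t\<in>S. t \<le> s \<or> next_atom s \<le> t"
proof -
  have fin: "finite {t\<in>S. s < t}" using finite_S by simp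
  have "{t\<in>S. s < t} \<noteq> {}" using assms finite_S S_nonempty Max_in by fastforce
  then have "next_atom s \<in> {t\<in>S. s < t}" unfolding next_atom_def using Min_in[OF fin] by blast
  then show "next_atom s \<in> S" "s < next_atom s" by auto
  show "\<forall>t\<in>S. t \<le> s \<or> next_atom s \<le> t"
    unfolding next_atom_def using Min_le[OF fin] by force
qed

text \<open>The factor \<open>\<Prod>t\<in>S-{s}. s - t\<close> in \<open>P_atom\<close> alternates in sign along the
  ordered atoms.\<close>
lemma P_sign_change_consecutive:
  assumes a: "a \<noteq> 0" and s: "s \<in> S" and u: "u \<in> S" "s < u"
    and consecutive: "\<forall>t\<in>S. t \<le> s \<or> u \<le> t"
  shows "P a s * P a u < 0"
proof -
  define T where "T = S - {s} - {u}"
  have ps: "(\<Prod>t\<in>S-{s}. s - t) = (s - u) * (\<Prod>t\<in>T. s - t)"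
    unfolding T_def using u finite_S by (subst prod.remove[of _ u]) auto
  have pu: "(\<Prod>t\<in>S-{u}. u - t) = (u - s) * (\<Prod>t\<in>T. u - t)"
  proof -
    have "S - {u} - {s} = T" by (auto simp: T_def)
    then show ?thesis using s u finite_S by (subst prod.remove[of _ s]) auto
  qed
  have eq: "P a s * P a u =
      (a * a * p s * p u * (\<Prod>t\<in>T. (s - t) * (u - t))) * ((s - u) * (u - s))"
    unfolding P_atom[OF s] P_atom[OF u(1)] ps pu prod.distrib by (simp add: algebra_simps)
  have "(\<Prod>t\<in>T. (s - t) * (u - t)) > 0"
  proof (rule prod_pos)
    fix t assume "t \<in> T"
    then have "t < s \<or> u < t" using consecutive by (force simp: T_def)
    then show "(s - t) * (u - t) > 0" using u(2) by (auto simp: zero_less_mult_iff)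
  qed
  moreover have "a * a > 0" using a by (auto simp: zero_less_mult_iff linorder_neq_iff)
  ultimately have "a * a * p s * p u * (\<Prod>t\<in>T. (s - t) * (u - t)) > 0"
    using p_pos s u by (metis mult_pos_pos)
  moreover have "(s - u) * (u - s) < 0" using u by (intro mult_neg_pos) auto
  ultimately show ?thesis unfolding eq by (rule mult_pos_neg)
qed

lemma P_Max_neg: "a > 0 \<Longrightarrow> P a (Max S) < 0"
proof -
  assume a: "a > 0"
  have M: "Max S \<in> S" using finite_S S_nonempty by simp
  have "(\<Prod>t\<in>S-{Max S}. Max S - t) > 0"
    using Max_ge[OF finite_S] by (intro prod_pos) (fastforce simp: order_le_less)
  then show ?thesis using P_atom[OF M, of a] a p_pos M by simp
qed

lemma P_beyond_Max_pos: "a > 0 \<Longrightarrow> P a (Max S + a + 1) > 0"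
proof -
  assume a: "a > 0"
  define x where "x = Max S + a + 1"
  have far: "a + 1 \<le> x - s" if "s \<in> S" for s using finite_S that by (simp add: x_def)
  then have far_pos: "x - s > 0" if "s \<in> S" for s using that a by fastforce
  have "x \<notin> S" using far a by force
  have "Q x > 0" unfolding Q_def using far a by (intro prod_pos) force
  have "G_real x \<le> (\<Sum>s\<in>S. p s / (a + 1))"
    unfolding G_real_def using far far_pos p_pos a
    by (intro sum_mono divide_left_mono) (auto intro: mult_pos_pos)
  also have "\<dots> = 1 / (a + 1)" using sum_p by (simp add: sum_divide_distrib[symmetric])
  finally have "a * G_real x \<le> a * (1 / (a + 1))" using a by (intro mult_left_mono) auto
  also have "\<dots> < 1" using a by simp
  finally show ?thesis
    using P_eq_Q_mult[OF \<open>x \<notin> S\<close>] \<open>Q x > 0\<close> by (simp add: x_def)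
qed

lemma P_sign_change_below_Min: "a < 0 \<Longrightarrow> P a (Min S + a - 1) * P a (Min S) < 0"
proof -
  assume a: "a < 0"
  define m where "m = Min S"
  define x where "x = m + a - 1"
  have m: "m \<in> S" using finite_S S_nonempty by (simp add: m_def)
  have far: "1 - a \<le> s - x" if "s \<in> S" for s using finite_S that by (simp add: x_def m_def)
  then have far_pos: "s - x > 0" if "s \<in> S" for s using that a by fastforce
  have "x \<notin> S" using far a by force
  have "(\<Sum>s\<in>S. p s / (s - x)) \<le> (\<Sum>s\<in>S. p s / (1 - a))"
    using far far_pos p_pos a by (intro sum_mono divide_left_mono) (auto intro: mult_pos_pos)
  also have "\<dots> = 1 / (1 - a)" using sum_p by (simp add: sum_divide_distrib[symmetric])
  finally have "(- a) * (\<Sum>s\<in>S. p s / (s - x)) \<le> (- a) * (1 / (1 - a))"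
    using a by (intro mult_left_mono) auto
  also have "\<dots> < 1" using a by (simp add: field_simps)
  also have "(\<Sum>s\<in>S. p s / (s - x)) = - G_real x"
    unfolding G_real_def by (simp add: sum_negf[symmetric] minus_divide_right)
  finally have G: "1 - a * G_real x > 0" by simp
  have "(\<Prod>t\<in>S-{m}. (m - t) * (x - t)) > 0"
  proof (rule prod_pos)
    fix t assume t: "t \<in> S - {m}"
    then have "m < t" using Min_le[OF finite_S] by (fastforce simp: m_def order_le_less)
    moreover have "x < t" using far t a by force
    ultimately show "(m - t) * (x - t) > 0" by (intro mult_neg_neg) auto
  qed
  then have "(- a) * p m * (1 - a * G_real x) * (\<Prod>t\<in>S-{m}. (m - t) * (x - t)) > 0"
    using a p_pos m G by (intro mult_pos_pos) auto
  moreover have "x - m < 0" using a by (simp add: x_def)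
  moreover have Qx: "Q x = (x - m) * (\<Prod>t\<in>S-{m}. x - t)"
    unfolding Q_def using m finite_S by (simp add: prod.remove)
  have "P a x * P a m =
      ((- a) * p m * (1 - a * G_real x) * (\<Prod>t\<in>S-{m}. (m - t) * (x - t))) * (x - m)"
    unfolding P_eq_Q_mult[OF \<open>x \<notin> S\<close>] P_atom[OF m] Qx prod.distrib by (simp add: algebra_simps)
  ultimately have "P a x * P a m < 0" by (simp only: mult_pos_neg)
  then show ?thesis by (simp add: m_def x_def)
qed

lemma P_root_outside_atoms:
  assumes "a \<noteq> 0"
  shows "\<exists>e. P a e = 0 \<and> (e < Min S \<or> Max S < e)"
proof (cases "a > 0")
  case True
  then have "P a (Max S) * P a (Max S + a + 1) < 0"
    using P_Max_neg P_beyond_Max_pos by (simp add: mult_neg_pos)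
  then show ?thesis
    using IVT_sign_change[OF continuous_on_P, of "Max S" "Max S + a + 1" a] True by auto
next
  case False
  then have "a < 0" using assms by simp
  then show ?thesis
    using IVT_sign_change[OF continuous_on_P, of "Min S + a - 1" "Min S" a]
      P_sign_change_below_Min by auto
qed

lemma P_roots_between_atoms:
  assumes a: "a \<noteq> 0"
  obtains r where "inj_on r (S - {Max S})"
    and "\<And>s. s \<in> S - {Max S} \<Longrightarrow> Min S < r s \<and> r s < Max S \<and> P a (r s) = 0"
proof -
  let ?S' = "S - {Max S}"
  have below_Max: "s \<in> ?S' \<Longrightarrow> s < Max S" for s
    using Max_ge[OF finite_S] by (fastforce simp: order_le_less)
  have "\<forall>s\<in>?S'. \<exists>x. s < x \<and> x < next_atom s \<and> P a x = 0"
    using next_atom below_Max P_sign_change_consecutive[OF a]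
    by (intro ballI IVT_sign_change[OF continuous_on_P]) auto
  then obtain r where r: "\<And>s. s \<in> ?S' \<Longrightarrow> s < r s \<and> r s < next_atom s \<and> P a (r s) = 0"
    by metis
  have "inj_on r ?S'"
  proof (rule inj_onI)
    have False if "s1 \<in> ?S'" "s2 \<in> ?S'" "s1 < s2" "r s1 = r s2" for s1 s2
    proof -
      have "next_atom s1 \<le> s2" using next_atom(3)[OF below_Max[OF that(1)]] that by force
      then show False using r[OF that(1)] r[OF that(2)] that(4) by linarith
    qed
    then show "s1 = s2" if "s1 \<in> ?S'" "s2 \<in> ?S'" "r s1 = r s2" for s1 s2
      using that by (metis linorder_neqE_linordered_idom)
  qed
  moreover have "Min S < r s \<and> r s < Max S \<and> P a (r s) = 0" if "s \<in> ?S'" for s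
    using r[OF that] next_atom[OF below_Max[OF that]] finite_S that
    by (metis DiffD1 Max_ge Min_le le_less_trans less_le_trans)
  ultimately show ?thesis by (rule that)
qed

lemma card_P_roots_ge: "card S \<le> card (P_roots a)"
proof (cases "a = 0")
  case True
  have "S \<subseteq> P_roots 0" using P_atom by (auto simp: P_roots_def)
  then show ?thesis using True card_mono[OF finite_P_roots] by blast
next
  case a: False
  obtain r where r: "inj_on r (S - {Max S})"
    and r_root: "\<And>s. s \<in> S - {Max S} \<Longrightarrow> Min S < r s \<and> r s < Max S \<and> P a (r s) = 0"
    using P_roots_between_atoms[OF a] by blast
  obtain e where e: "P a e = 0" "e \<notin> r ` (S - {Max S})"
    using P_root_outside_atoms[OF a] r_root by fastforce
  have "card (insert e (r ` (S - {Max S}))) = card S"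
    using r e finite_S card_S_pos Max_in[OF finite_S S_nonempty] by (simp add: card_image)
  moreover have "insert e (r ` (S - {Max S})) \<subseteq> P_roots a"
    using r_root e by (auto simp: P_roots_def)
  ultimately show ?thesis using card_mono[OF finite_P_roots] by metis
qed

lemma card_P_roots: "card (P_roots a) = card S"
  using card_P_roots_le card_P_roots_ge by (rule antisym)

lemma poly_Q_poly_nonzero: "Im z > 0 \<Longrightarrow> poly Q_poly z \<noteq> 0"
  unfolding poly_Q_poly using finite_S by (auto simp: prod_zero_iff)

lemma G_eq_R_div_Q: assumes z: "Im z > 0" shows "G z = poly R_poly z / poly Q_poly z"
proof -
  have "poly Q_poly z * (of_real (p s) / (z - of_real s)) = of_real (p s) * (\<Prod>t\<in>S-{s}. z - of_real t)"
    if s: "s \<in> S" for s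
  proof -
    have "poly Q_poly z = (z - of_real s) * (\<Prod>t\<in>S-{s}. z - of_real t)"
      unfolding poly_Q_poly using s finite_S by (simp add: prod.remove)
    moreover have "z - of_real s \<noteq> 0" using z by (auto simp: complex_eq_iff)
    ultimately show ?thesis by simp
  qed
  then have "poly Q_poly z * G z = poly R_poly z"
    unfolding G_def poly_R_poly sum_distrib_left by (rule sum.cong[OF refl])
  then show ?thesis using poly_Q_poly_nonzero[OF z] by (simp add: field_simps)
qed

lemma Im_G_neg: assumes z: "Im z > 0" shows "Im (G z) < 0"
proof -
  have "Im (of_real (p s) / (z - of_real s)) < 0" if "s \<in> S" for s
    using Im_one_div_neg[of "z - of_real s"] z p_pos that by (simp add: Im_of_real_div mult_pos_neg)
  then have "(\<Sum>s\<in>S. Im (of_real (p s) / (z - of_real s))) < (\<Sum>s\<in>S. 0)"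
    using finite_S S_nonempty by (intro sum_strict_mono) auto
  then show ?thesis unfolding G_def Im_sum by simp
qed

definition root_weight :: "real \<Rightarrow> real \<Rightarrow> real" where
  "root_weight a b = (if b \<in> P_roots a then R b / (\<Prod>b'\<in>P_roots a - {b}. b - b') else 0)"

lemma card_of_real_P_roots: "card (complex_of_real ` P_roots a) = card S"
  using card_P_roots by (simp add: card_image inj_on_def)

lemma P_poly_eq_prod: "P_poly a = (\<Prod>b\<in>P_roots a. root_factor b)"
proof (rule poly_eqI_on_finite_set[OF _ card_of_real_P_roots])
  show "degree (\<Prod>b\<in>P_roots a. root_factor b) \<le> card S"
    and "coeff (P_poly a) (card S) = coeff (\<Prod>b\<in>P_roots a. root_factor b) (card S)"
    using degree_prod_root_factor[OF finite_P_roots] coeff_prod_root_factor[OF finite_P_roots]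
    by (simp_all add: card_P_roots coeff_P_poly)
  show "\<forall>x\<in>complex_of_real ` P_roots a. poly (P_poly a) x = poly (\<Prod>b\<in>P_roots a. root_factor b) x"
    using finite_P_roots by (auto simp: poly_P_poly_of_real poly_prod prod_zero_iff P_roots_def)
qed (use finite_P_roots degree_P_poly in auto)

text \<open>Lagrange interpolation of \<open>R\<close> at the roots of \<open>P a\<close>.\<close>
lemma R_poly_eq_interpolation:
  "R_poly = (\<Sum>b\<in>P_roots a. smult (of_real (root_weight a b)) (\<Prod>b'\<in>P_roots a - {b}. root_factor b'))"
  (is "_ = ?L")
proof (rule poly_eqI_on_finite_set[OF _ card_of_real_P_roots])
  have "degree ?L \<le> card S - 1"
  proof (intro degree_sum_le finite_P_roots)
    fix b assume "b \<in> P_roots a"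
    then show "degree (smult (of_real (root_weight a b)) (\<Prod>b'\<in>P_roots a - {b}. root_factor b')) \<le> card S - 1"
      using degree_prod_root_factor[of "P_roots a - {b}"] finite_P_roots card_P_roots
      by (simp add: order_trans[OF degree_smult_le])
  qed
  moreover have "card S - 1 < card S" using card_S_pos by simp
  ultimately show "degree ?L \<le> card S" and "coeff R_poly (card S) = coeff ?L (card S)"
    using degree_R_poly by (simp_all add: coeff_eq_0)
  show "\<forall>x\<in>complex_of_real ` P_roots a. poly R_poly x = poly ?L x"
  proof
    fix x assume "x \<in> complex_of_real ` P_roots a"
    then obtain b0 where b0: "b0 \<in> P_roots a" and x: "x = of_real b0" by blast
    have "poly ?L x = (\<Sum>b\<in>P_roots a. of_real (root_weight a b) * (\<Prod>b'\<in>P_roots a - {b}. x - of_real b'))"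
      by (simp add: poly_sum poly_prod)
    also have "\<dots> = of_real (root_weight a b0) * (\<Prod>b'\<in>P_roots a - {b0}. x - of_real b')"
    proof -
      have "(\<Prod>b'\<in>P_roots a - {b}. x - of_real b') = 0" if "b \<in> P_roots a - {b0}" for b
        using b0 that finite_P_roots[of a] by (intro prod_zero) (auto simp: x)
      then have "(\<Sum>b\<in>P_roots a - {b0}. of_real (root_weight a b) * (\<Prod>b'\<in>P_roots a - {b}. x - of_real b')) = 0"
        by (intro sum.neutral) simp
      then show ?thesis by (simp add: sum.remove[OF finite_P_roots b0])
    qed
    also have "\<dots> = of_real (R b0)"
    proof -
      have "(\<Prod>b'\<in>P_roots a - {b0}. b0 - b') \<noteq> 0" using finite_P_roots[of a] by auto
      then show ?thesis using b0 by (simp add: x root_weight_def flip: of_real_diff of_real_prod)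
    qed
    finally show "poly R_poly x = poly ?L x" by (simp add: x poly_R_poly_of_real)
  qed
qed (use finite_P_roots degree_R_poly in auto)

lemma sum_root_weight: "(\<Sum>b\<in>P_roots a. root_weight a b) = 1"
proof -
  have "coeff (\<Prod>b'\<in>P_roots a - {b}. root_factor b') (card S - 1) = 1" if "b \<in> P_roots a" for b
    using coeff_prod_root_factor[of "P_roots a - {b}"] finite_P_roots card_P_roots that by simp
  then have "coeff R_poly (card S - 1) = of_real (\<Sum>b\<in>P_roots a. root_weight a b)"
    by (subst R_poly_eq_interpolation[of a]) (simp add: coeff_sum)
  then show ?thesis using coeff_R_poly by (metis of_real_eq_1_iff)
qed

lemma partial_fractions:
  assumes z: "Im z > 0"
  shows "1 / (1 / G z - of_real a) = (\<Sum>b\<in>P_roots a. of_real (root_weight a b) / (z - of_real b))"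
proof -
  have z_b: "z - of_real b \<noteq> 0" for b using z by (auto simp: complex_eq_iff)
  have P: "poly (P_poly a) z = (\<Prod>b\<in>P_roots a. z - of_real b)"
    by (simp add: P_poly_eq_prod poly_prod)
  then have "poly (P_poly a) z \<noteq> 0" using z_b finite_P_roots by (auto simp: prod_zero_iff)
  have "G z \<noteq> 0" using Im_G_neg[OF z] by auto
  then have "poly R_poly z \<noteq> 0" using G_eq_R_div_Q[OF z] by auto
  then have "1 / G z - of_real a = poly (P_poly a) z / poly R_poly z"
    using G_eq_R_div_Q[OF z] poly_Q_poly_nonzero[OF z] \<open>G z \<noteq> 0\<close>
    by (simp add: P_poly_def field_simps)
  then have "1 / (1 / G z - of_real a) = poly R_poly z / poly (P_poly a) z"
    by simp
  also have "\<dots> = (\<Sum>b\<in>P_roots a. of_real (root_weight a b) * (\<Prod>b'\<in>P_roots a - {b}. z - of_real b'))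
                 / (\<Prod>b\<in>P_roots a. z - of_real b)"
    by (subst R_poly_eq_interpolation[of a]) (simp add: P poly_sum poly_prod)
  also have "\<dots> = (\<Sum>b\<in>P_roots a. of_real (root_weight a b) / (z - of_real b))"
    unfolding sum_divide_distrib
  proof (rule sum.cong[OF refl])
    fix b assume "b \<in> P_roots a"
    then have "(\<Prod>b\<in>P_roots a. z - of_real b) = (z - of_real b) * (\<Prod>b'\<in>P_roots a - {b}. z - of_real b')"
      using finite_P_roots by (simp add: prod.remove)
    moreover have "(\<Prod>b'\<in>P_roots a - {b}. z - of_real b') \<noteq> 0"
      using z_b finite_P_roots by (auto simp: prod_zero_iff)
    ultimately show "of_real (root_weight a b) * (\<Prod>b'\<in>P_roots a - {b}. z - of_real b') / (\<Prod>b\<in>P_roots a. z - of_real b)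
        = of_real (root_weight a b) / (z - of_real b)" using z_b[of b] by simp
  qed
  finally show ?thesis .
qed

text \<open>Near \<open>b\<close> the term \<open>root_weight a b / (z - b)\<close> dominates \<open>partial_fractions\<close>, whose
  imaginary part is negative on the upper half-plane.\<close>
lemma root_weight_pos:
  assumes b: "b \<in> P_roots a" shows "root_weight a b > 0"
proof -
  have "R b \<noteq> 0" using R_nonzero_at_root b by (simp add: P_roots_def)
  then have "root_weight a b \<noteq> 0" using b finite_P_roots by (simp add: root_weight_def)
  moreover have "root_weight a b \<ge> 0"
  proof (rule LIMSEQ_le_const)
    show "(\<lambda>n. - (1 / real (Suc n)) * Im (\<Sum>b'\<in>P_roots a. of_real (root_weight a b') /
            (of_real b + \<i> * of_real (1 / real (Suc n)) - of_real b'))) \<longlonglongrightarrow> root_weight a b"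
      using tendsto_Im_partial_fractions[OF finite_P_roots[of a], of "root_weight a" b,
          unfolded if_P[OF b]] .
    show "\<exists>N. \<forall>n\<ge>N. 0 \<le> - (1 / real (Suc n)) * Im (\<Sum>b'\<in>P_roots a. of_real (root_weight a b') /
            (of_real b + \<i> * of_real (1 / real (Suc n)) - of_real b'))"
    proof (intro exI allI impI)
      fix n :: nat
      let ?z = "of_real b + \<i> * of_real (1 / real (Suc n))"
      have "Im ?z > 0" by simp
      then have "Im (1 / (1 / G ?z - of_real a)) < 0"
        using Im_one_div_pos[OF Im_G_neg] by (intro Im_one_div_neg) simp
      then have "Im (\<Sum>b'\<in>P_roots a. of_real (root_weight a b') / (?z - of_real b')) < 0"
        unfolding partial_fractions[OF \<open>Im ?z > 0\<close>] .
      then show "0 \<le> - (1 / real (Suc n)) * Im (\<Sum>b'\<in>P_roots a. of_real (root_weight a b') / (?z - of_real b'))"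
        by (intro mult_nonpos_nonpos) auto
    qed
  qed
  ultimately show ?thesis by simp
qed

lemma root_weight_nonneg: "root_weight a x \<ge> 0"
  using root_weight_pos[of x a] by (cases "x \<in> P_roots a") (auto simp: root_weight_def)

lemma card_UN_P_roots: "finite A \<Longrightarrow> card (\<Union>a\<in>A. P_roots a) = card A * card S"
  using finite_P_roots P_roots_disjoint by (subst card_UN_disjoint) (auto simp: card_P_roots)

lemma sum_P_roots_superset:
  assumes "finite T" and "P_roots a \<subseteq> T" and "\<And>x. f x 0 = 0"
  shows "(\<Sum>x\<in>T. f x (root_weight a x)) = (\<Sum>x\<in>P_roots a. f x (root_weight a x))"
  using assms by (intro sum.mono_neutral_right) (auto simp: root_weight_def)

lemma finite_atomic_mixture:
  assumes \<mu>: "finite_atomic \<mu> A q"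
  defines "F \<equiv> \<Union>a\<in>A. P_roots a" and "w \<equiv> \<lambda>x. \<Sum>a\<in>A. q a * root_weight a x"
  shows "finite_atomic (atomic_measure F w) F w"
proof (rule finite_atomic_atomic_measure)
  have A: "finite A" "\<forall>a\<in>A. q a > 0" using \<mu> by (auto simp: finite_atomic_def)
  show F: "finite F" using A finite_P_roots by (simp add: F_def)
  show "\<forall>x\<in>F. w x > 0"
  proof
    fix x assume "x \<in> F"
    then obtain a where "a \<in> A" "x \<in> P_roots a" by (auto simp: F_def)
    then show "w x > 0"
      unfolding w_def using A root_weight_pos root_weight_nonneg
      by (intro sum_pos2[where i=a]) (auto intro: mult_nonneg_nonneg less_imp_le)
  qed
  have "sum w F = (\<Sum>a\<in>A. q a * (\<Sum>x\<in>F. root_weight a x))"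
    unfolding w_def by (subst sum.swap) (simp add: sum_distrib_left)
  also have "\<dots> = sum q A"
  proof (rule sum.cong[OF refl])
    fix a assume "a \<in> A"
    then show "q a * (\<Sum>x\<in>F. root_weight a x) = q a"
      using sum_P_roots_superset[OF F, of a "\<lambda>_ r. r"] by (auto simp: F_def sum_root_weight)
  qed
  finally show "sum w F = 1" using finite_atomic_sum_weights[OF \<mu>] by simp
qed

text \<open>\<open>\<mu> \<rhd> \<nu>\<close> is the mixture, with the weights of \<open>\<mu>\<close>, of the measures \<open>\<delta>\<^sub>a \<rhd> \<nu>\<close>,
  and \<open>\<delta>\<^sub>a \<rhd> \<nu>\<close> has the atoms \<open>P_roots a\<close> with weights \<open>root_weight a\<close>.\<close>
lemma cauchy_G_mixture:
  assumes \<mu>: "finite_atomic \<mu> A q" and z: "Im z > 0"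
  defines "F \<equiv> \<Union>a\<in>A. P_roots a" and "w \<equiv> \<lambda>x. \<Sum>a\<in>A. q a * root_weight a x"
  shows "cauchy_G (atomic_measure F w) z = cauchy_G \<mu> (1 / G z)"
proof -
  have F: "finite F" "\<And>a. a \<in> A \<Longrightarrow> P_roots a \<subseteq> F"
    using \<mu> finite_P_roots by (auto simp: F_def finite_atomic_def)
  have "finite_atomic (atomic_measure F w) F w"
    unfolding F_def w_def by (rule finite_atomic_mixture[OF \<mu>])
  then have "cauchy_G (atomic_measure F w) z
      = (\<Sum>x\<in>F. \<Sum>a\<in>A. of_real (q a) * (of_real (root_weight a x) / (z - of_real x)))"
    by (simp add: cauchy_G_finite_atomic w_def sum_divide_distrib)
  also have "\<dots> = (\<Sum>a\<in>A. of_real (q a) * (\<Sum>x\<in>F. of_real (root_weight a x) / (z - of_real x)))"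
    by (subst sum.swap) (simp add: sum_distrib_left)
  also have "\<dots> = (\<Sum>a\<in>A. of_real (q a) / (1 / G z - of_real a))"
  proof (rule sum.cong[OF refl])
    fix a assume "a \<in> A"
    then show "of_real (q a) * (\<Sum>x\<in>F. of_real (root_weight a x) / (z - of_real x))
        = of_real (q a) / (1 / G z - of_real a)"
      using sum_P_roots_superset[OF F(1) F(2), of a "\<lambda>x r. of_real r / (z - of_real x)"]
      by (simp add: partial_fractions[OF z, of a, symmetric])
  qed
  also have "\<dots> = cauchy_G \<mu> (1 / G z)"
    by (simp add: cauchy_G_finite_atomic[OF \<mu>])
  finally show ?thesis .
qed

lemma monotone_conv_finite_atomic:
  assumes \<mu>: "finite_atomic \<mu> A q" and \<nu>: "finite_atomic \<nu> S p"
  shows "finite_atomic (monotone_conv \<mu> \<nu>) (\<Union>a\<in>A. P_roots a) (\<lambda>x. \<Sum>a\<in>A. q a * root_weight a x)"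
proof -
  have "cauchy_H \<nu> z = 1 / G z" for z
    by (simp add: cauchy_H_def cauchy_G_finite_atomic[OF \<nu>] G_def)
  then have "monotone_conv \<mu> \<nu> = atomic_measure (\<Union>a\<in>A. P_roots a) (\<lambda>x. \<Sum>a\<in>A. q a * root_weight a x)"
    using cauchy_G_mixture[OF \<mu>]
    by (intro monotone_conv_eqI[OF finite_atomic_mixture[OF \<mu>]]) (simp add: cauchy_H_def)
  then show ?thesis using finite_atomic_mixture[OF \<mu>] by simp
qed

end

theorem corollary3p3:
  fixes \<mu> \<nu> :: "real measure" and m n :: nat
  assumes "atomic_prob \<mu> m" and "atomic_prob \<nu> n"
  shows "atomic_prob (monotone_conv \<mu> \<nu>) (m * n)"
proof -
  obtain A q where \<mu>: "finite_atomic \<mu> A q" and m: "card A = m"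
    using assms(1) atomic_prob_iff_finite_atomic by blast
  obtain S p where \<nu>: "finite_atomic \<nu> S p" and n: "card S = n"
    using assms(2) atomic_prob_iff_finite_atomic by blast
  interpret finite_distribution S p
    using \<nu> finite_atomic_sum_weights[OF \<nu>] by unfold_locales (auto simp: finite_atomic_def)
  have "card (\<Union>a\<in>A. P_roots a) = m * n"
    using \<mu> card_UN_P_roots m n by (simp add: finite_atomic_def)
  then show ?thesis
    using monotone_conv_finite_atomic[OF \<mu> \<nu>] atomic_prob_iff_finite_atomic by blast
qed

end
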